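(* Let $\Gamma$ be a non-elementary Fuchsian group and $\hat\Gamma=\{\hat\gamma:\gamma\in\Gamma\}$, where $\hat\gamma(z,w)=(\gamma(z),\gamma(w))$. Then every holomorphic function $F:G\to\mathbb{C}$ with $F\circ\hat\gamma=F$ for all $\gamma\in\Gamma$ is constant.
   Context: $\mathbb{H}=\{z\in\mathbb{C}:\operatorname{Im}z>0\}$; $\hat{\mathbb{C}}=\mathbb{C}\cup\{\infty\}$; $G=\hat{\mathbb{C}}^2\setminus\{(z,z):z\in\hat{\mathbb{C}}\}$. A Fuchsian group is a discrete subgroup of the group of conformal automorphisms of $\mathbb{H}$ (real Möbius transformations, acting on $\hat{\mathbb{C}}$). Its limit set $\Lambda(\Gamma)\subseteq\mathbb{R}\cup\{\infty\}$ is the set of accumulation points of the orbit $\Gamma z$ of a point $z\in\mathbb{H}$ (independent of $z$). $\Gamma$ is elementary if $\Lambda(\Gamma)$ has at most two points, and non-elementary otherwise. *)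

theory Defs
  imports "HOL-Analysis.Analysis"
begin

text \<open>The Riemann sphere: \<open>None\<close> is the point at infinity.\<close>
type_synonym csphere = "complex option"

definition G_dom :: "(csphere \<times> csphere) set" where
  "G_dom = {(z, w). z \<noteq> w}"

definition moebius_act :: "real^2^2 \<Rightarrow> csphere \<Rightarrow> csphere" where
  "moebius_act A p =
     (let a = complex_of_real (A$1$1); b = complex_of_real (A$1$2);
          c = complex_of_real (A$2$1); d = complex_of_real (A$2$2)
      in case p of
           None \<Rightarrow> (if c = 0 then None else Some (a / c))
         | Some z \<Rightarrow> (if c * z + d = 0 then None else Some ((a * z + b) / (c * z + d))))"

text \<open>Fuchsian group: a discrete subgroup of SL(2,R) (acting via Moebius maps;
  equivalently, via the projection, a discrete subgroup of PSL(2,R) = Aut(H)).\<close>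
definition fuchsian :: "(real^2^2) set \<Rightarrow> bool" where
  "fuchsian \<Gamma> \<longleftrightarrow>
     (\<forall>A\<in>\<Gamma>. det A = 1) \<and> mat 1 \<in> \<Gamma> \<and>
     (\<forall>A\<in>\<Gamma>. \<forall>B\<in>\<Gamma>. A ** B \<in> \<Gamma>) \<and> (\<forall>A\<in>\<Gamma>. matrix_inv A \<in> \<Gamma>) \<and>
     (\<forall>A\<in>\<Gamma>. \<exists>e>0. \<forall>B\<in>\<Gamma>. dist B A < e \<longrightarrow> B = A)"

definition orbit_i :: "(real^2^2) set \<Rightarrow> complex set" where
  "orbit_i \<Gamma> = {z. \<exists>A\<in>\<Gamma>. moebius_act A (Some \<i>) = Some z}"

text \<open>Limit set: accumulation points of the orbit in the Riemann sphere
  (infinity is an accumulation point iff the orbit is unbounded).\<close>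
definition limit_set :: "(real^2^2) set \<Rightarrow> csphere set" where
  "limit_set \<Gamma> = {Some x | x. x islimpt orbit_i \<Gamma>} \<union>
                 (if bounded (orbit_i \<Gamma>) then {} else {None})"

definition non_elementary :: "(real^2^2) set \<Rightarrow> bool" where
  "non_elementary \<Gamma> \<longleftrightarrow> \<not> (finite (limit_set \<Gamma>) \<and> card (limit_set \<Gamma>) \<le> 2)"

definition sphere_chart :: "bool \<Rightarrow> complex \<Rightarrow> csphere" where
  "sphere_chart at_inf z = (if at_inf then (if z = 0 then None else Some (1 / z)) else Some z)"

definition holomorphic2_on :: "(complex \<times> complex \<Rightarrow> complex) \<Rightarrow> (complex \<times> complex) set \<Rightarrow> bool" where
  "holomorphic2_on f S \<longleftrightarrow>
     (\<forall>p\<in>S. \<exists>c1 c2. (f has_derivative (\<lambda>(u, v). c1 * u + c2 * v)) (at p))"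

definition holomorphic_on_G :: "(csphere \<times> csphere \<Rightarrow> complex) \<Rightarrow> bool" where
  "holomorphic_on_G F \<longleftrightarrow>
     (\<forall>a b. holomorphic2_on (\<lambda>(z, w). F (sphere_chart a z, sphere_chart b w))
               {(z, w). (sphere_chart a z, sphere_chart b w) \<in> G_dom})"

end

theory Submission
  imports Defs "HOL-Complex_Analysis.Conformal_Mappings"
begin

text \<open>
  Discreteness forces every sequence of distinct elements of \<open>\<Gamma>\<close> to have a subsequence
  with north-south dynamics: \<open>A\<^sub>n z \<rightarrow> X\<close> for \<open>z \<noteq> Y\<close> and \<open>A\<^sub>n\<^sup>-\<^sup>1 q \<rightarrow> Y\<close> for \<open>q \<noteq> X\<close>.
  If \<open>A\<^sub>n i\<close> tends to a limit point \<open>l\<close>, then \<open>X = l\<close>, and letting \<open>n \<rightarrow> \<infinity>\<close> in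
  \<open>F (z, A\<^sub>n\<^sup>-\<^sup>1 q) = F (A\<^sub>n z, q)\<close> gives \<open>F (z, Y) = F (l, q)\<close>: the row \<open>F (l, \<cdot>)\<close> and,
  symmetrically, the column \<open>F (\<cdot>, l)\<close> are constant off the diagonal. For three distinct
  limit points these constants agree, say with \<open>c\<close>. The points \<open>v\<close> with
  \<open>F (v, \<cdot>) = F (\<cdot>, v) = c\<close> form a \<open>\<Gamma>\<close>-invariant set, which by the dynamics accumulates at a
  limit point; the identity theorem on each slice \<open>w \<mapsto> F (z, w)\<close> then gives \<open>F = c\<close>.
\<close>

section \<open>Real 2x2 matrices and Fuchsian groups\<close>

definition adjugate2 :: "real^2^2 \<Rightarrow> real^2^2" where
  "adjugate2 A = vector [vector [A$2$2, - A$1$2], vector [- A$2$1, A$1$1]]"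

lemma adjugate2_nth [simp]:
  "adjugate2 A $1$1 = A$2$2" "adjugate2 A $1$2 = - A$1$2"
  "adjugate2 A $2$1 = - A$2$1" "adjugate2 A $2$2 = A$1$1"
  by (simp_all add: adjugate2_def)

lemma matrix_matrix_mult_2_nth:
  "((A::real^2^2) ** B) $ i $ j = A$i$1 * B$1$j + A$i$2 * B$2$j"
  by (simp add: matrix_matrix_mult_def sum_2)

lemma mat2_eq_iff:
  "(A::real^2^2) = B \<longleftrightarrow> A$1$1 = B$1$1 \<and> A$1$2 = B$1$2 \<and> A$2$1 = B$2$1 \<and> A$2$2 = B$2$2"
  by (auto simp: vec_eq_iff forall_2)

lemma adjugate2_mult:
  assumes "det A = 1"
  shows "adjugate2 A ** A = mat 1" "A ** adjugate2 A = mat 1"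
  using assms by (auto simp: mat2_eq_iff matrix_matrix_mult_2_nth det_2 mat_def algebra_simps)

lemma matrix_inv_eq_adjugate2:
  assumes "det A = (1::real)"
  shows "matrix_inv A = adjugate2 A"
proof -
  have "\<exists>A'. A ** A' = mat 1 \<and> A' ** A = mat 1"
    using adjugate2_mult[OF assms] by blast
  then have inv: "matrix_inv A ** A = mat 1"
    unfolding matrix_inv_def by (rule someI2_ex) blast
  have "matrix_inv A = matrix_inv A ** (A ** adjugate2 A)"
    using adjugate2_mult[OF assms] by simp
  also have "\<dots> = adjugate2 A"
    by (simp add: matrix_mul_assoc inv)
  finally show ?thesis .
qed

lemma adjugate2_scaleR: "adjugate2 (c *\<^sub>R A) = c *\<^sub>R adjugate2 A"
  by (simp add: mat2_eq_iff)

lemma det2_scaleR: "det (c *\<^sub>R (A::real^2^2)) = c^2 * det A"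
  by (simp add: det_2 power2_eq_square algebra_simps)

lemma det2_eq_0_rank_one:
  assumes "det (M::real^2^2) = 0" "M \<noteq> 0"
  obtains u1 u2 v1 v2 :: real where "u1 \<noteq> 0 \<or> u2 \<noteq> 0" "v1 \<noteq> 0 \<or> v2 \<noteq> 0"
    "M$1$1 = u1 * v1" "M$1$2 = u1 * v2" "M$2$1 = u2 * v1" "M$2$2 = u2 * v2"
proof -
  have det: "M$1$1 * M$2$2 = M$1$2 * M$2$1"
    using assms(1) by (simp add: det_2)
  consider "M$1$1 \<noteq> 0" | "M$1$1 = 0" "M$1$2 \<noteq> 0" | "M$1$1 = 0" "M$1$2 = 0"
    by blast
  then show ?thesis
  proof cases
    case 1
    then show ?thesis
      using that[of 1 "M$2$1 / M$1$1" "M$1$1" "M$1$2"] det by (auto simp: field_simps)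
  next
    case 2
    then show ?thesis
      using that[of 1 "M$2$2 / M$1$2" "M$1$1" "M$1$2"] det by (auto simp: field_simps)
  next
    case 3
    then show ?thesis
      using that[of 0 1 "M$2$1" "M$2$2"] assms(2) by (auto simp: mat2_eq_iff)
  qed
qed

lemma tendsto_mat2:
  assumes "\<And>i j. ((\<lambda>n. f n $ i $ j) \<longlongrightarrow> (A::real^2^2) $ i $ j) F"
  shows "(f \<longlongrightarrow> A) F"
  by (intro vec_tendstoI) (use assms in auto)

lemma tendsto_matrix_mult2:
  assumes "(f \<longlongrightarrow> (A::real^2^2)) F" "(g \<longlongrightarrow> (B::real^2^2)) F"
  shows "((\<lambda>n. f n ** g n) \<longlongrightarrow> A ** B) F"
  unfolding matrix_matrix_mult_2_nth
  by (intro tendsto_mat2) (simp only: matrix_matrix_mult_2_nth; intro tendsto_intros tendsto_vec_nth assms)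

lemma tendsto_adjugate2:
  assumes "(f \<longlongrightarrow> (A::real^2^2)) F"
  shows "((\<lambda>n. adjugate2 (f n)) \<longlongrightarrow> adjugate2 A) F"
proof (rule tendsto_mat2)
  fix i j :: 2
  show "((\<lambda>n. adjugate2 (f n) $ i $ j) \<longlongrightarrow> adjugate2 A $ i $ j) F"
    using exhaust_2[of i] exhaust_2[of j]
    by (elim disjE; simp; intro tendsto_intros tendsto_vec_nth assms)
qed

lemma tendsto_det2:
  assumes "(f \<longlongrightarrow> (A::real^2^2)) F"
  shows "((\<lambda>n. det (f n)) \<longlongrightarrow> det A) F"
  unfolding det_2 by (intro tendsto_intros tendsto_vec_nth assms)

lemma fuchsian_det: "fuchsian \<Gamma> \<Longrightarrow> A \<in> \<Gamma> \<Longrightarrow> det A = 1"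
  by (simp add: fuchsian_def)

lemma fuchsian_mult: "fuchsian \<Gamma> \<Longrightarrow> A \<in> \<Gamma> \<Longrightarrow> B \<in> \<Gamma> \<Longrightarrow> A ** B \<in> \<Gamma>"
  by (simp add: fuchsian_def)

lemma fuchsian_adjugate2: "fuchsian \<Gamma> \<Longrightarrow> A \<in> \<Gamma> \<Longrightarrow> adjugate2 A \<in> \<Gamma>"
  by (auto simp: fuchsian_def matrix_inv_eq_adjugate2[symmetric])

section \<open>Homogeneous coordinates\<close>

text \<open>The sphere as the complex projective line: \<open>sphere_of\<close> is the quotient map on
  \<open>\<complex>\<^sup>2 - {0}\<close> (junk value \<open>None\<close> at the origin), \<open>homog\<close> is a section of it, and
  \<open>moebius_act A\<close> is induced by the linear map \<open>cmat_vec A\<close>.\<close>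

definition sphere_of :: "complex \<times> complex \<Rightarrow> csphere" where
  "sphere_of h = (if snd h = 0 then None else Some (fst h / snd h))"

definition homog :: "csphere \<Rightarrow> complex \<times> complex" where
  "homog p = (case p of None \<Rightarrow> (1, 0) | Some z \<Rightarrow> (z, 1))"

definition cmat_vec :: "real^2^2 \<Rightarrow> complex \<times> complex \<Rightarrow> complex \<times> complex" where
  "cmat_vec A h = (of_real (A$1$1) * fst h + of_real (A$1$2) * snd h,
                   of_real (A$2$1) * fst h + of_real (A$2$2) * snd h)"

definition cscale :: "complex \<Rightarrow> complex \<times> complex \<Rightarrow> complex \<times> complex" where
  "cscale t h = (t * fst h, t * snd h)"

lemma cmat_vec_zero [simp]: "cmat_vec A (0, 0) = (0, 0)"
  by (simp add: cmat_vec_def)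

lemma cscale_eq_0_iff [simp]: "cscale t h = (0, 0) \<longleftrightarrow> t = 0 \<or> h = (0, 0)"
  by (cases h) (auto simp: cscale_def)

lemma cmat_vec_cscale: "cmat_vec A (cscale t h) = cscale t (cmat_vec A h)"
  by (simp add: cmat_vec_def cscale_def algebra_simps)

lemma cmat_vec_scaleR: "cmat_vec (c *\<^sub>R A) h = cscale (of_real c) (cmat_vec A h)"
  by (simp add: cmat_vec_def cscale_def algebra_simps)

lemma cmat_vec_adjugate2:
  "cmat_vec A (cmat_vec (adjugate2 A) h) = cscale (of_real (det A)) h"
  "cmat_vec (adjugate2 A) (cmat_vec A h) = cscale (of_real (det A)) h"
  by (simp_all add: cmat_vec_def cscale_def det_2 algebra_simps)

lemma tendsto_cmat_vec:
  assumes "(f \<longlongrightarrow> M) F"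
  shows "((\<lambda>n. cmat_vec (f n) h) \<longlongrightarrow> cmat_vec M h) F"
  unfolding cmat_vec_def by (intro tendsto_intros tendsto_vec_nth assms)

lemma sphere_of_cscale: "t \<noteq> 0 \<Longrightarrow> sphere_of (cscale t h) = sphere_of h"
  by (auto simp: sphere_of_def cscale_def)

lemma sphere_of_uminus: "sphere_of (- x, - y) = sphere_of (x, y)"
  by (simp add: sphere_of_def)

lemma sphere_of_homog [simp]: "sphere_of (homog p) = p"
  by (cases p) (auto simp: sphere_of_def homog_def)

lemma homog_nonzero [simp]: "homog p \<noteq> (0, 0)"
  by (cases p) (auto simp: homog_def)

lemma homog_sphere_of:
  assumes "h \<noteq> (0, 0)"
  obtains t where "t \<noteq> 0" "h = cscale t (homog (sphere_of h))"
proof (cases "snd h = 0")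
  case True
  then show ?thesis
    using assms that[of "fst h"] by (cases h) (auto simp: sphere_of_def homog_def cscale_def)
next
  case False
  then show ?thesis
    using that[of "snd h"] by (cases h) (auto simp: sphere_of_def homog_def cscale_def)
qed

lemma sphere_of_eq_iff:
  assumes "h \<noteq> (0, 0)" "k \<noteq> (0, 0)"
  shows "sphere_of h = sphere_of k \<longleftrightarrow> fst h * snd k = snd h * fst k"
proof (cases h; cases k)
  fix a b c d assume hk: "h = (a, b)" "k = (c, d)"
  show ?thesis
  proof (cases "b = 0")
    case True
    then show ?thesis using hk assms by (cases "d = 0") (auto simp: sphere_of_def)
  next
    case False
    then show ?thesis using hk assms
      by (cases "d = 0") (auto simp: sphere_of_def divide_eq_eq eq_divide_eq mult.commute)
  qed
qed

lemma sphere_of_real_neq_i: "sphere_of (of_real a, of_real b) \<noteq> Some \<i>"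
proof
  assume "sphere_of (of_real a, of_real b) = Some \<i>"
  then have "\<i> = of_real (a / b)"
    by (auto simp: sphere_of_def split: if_splits)
  then show False
    by (metis Im_complex_of_real imaginary_unit.sel(2) zero_neq_one)
qed

lemma moebius_act_eq_sphere_of: "moebius_act A p = sphere_of (cmat_vec A (homog p))"
  by (cases p) (simp_all add: moebius_act_def sphere_of_def cmat_vec_def homog_def Let_def)

lemma moebius_act_sphere_of:
  assumes "h \<noteq> (0, 0)"
  shows "moebius_act A (sphere_of h) = sphere_of (cmat_vec A h)"
proof -
  obtain t where t: "t \<noteq> 0" "h = cscale t (homog (sphere_of h))"
    using homog_sphere_of[OF assms] .
  have "sphere_of (cmat_vec A h) = sphere_of (cscale t (cmat_vec A (homog (sphere_of h))))"
    using t by (metis cmat_vec_cscale)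
  then show ?thesis
    using t by (simp add: sphere_of_cscale moebius_act_eq_sphere_of)
qed

lemma moebius_act_scaleR:
  "c \<noteq> 0 \<Longrightarrow> moebius_act A z = sphere_of (cmat_vec (c *\<^sub>R A) (homog z))"
  by (simp add: moebius_act_eq_sphere_of cmat_vec_scaleR sphere_of_cscale)

lemma moebius_act_adjugate2:
  assumes "det A = 1"
  shows "moebius_act A (moebius_act (adjugate2 A) q) = q"
    and "moebius_act (adjugate2 A) (moebius_act A q) = q"
proof -
  have inv: "cmat_vec A (cmat_vec (adjugate2 A) h) = h" "cmat_vec (adjugate2 A) (cmat_vec A h) = h" for h
    using cmat_vec_adjugate2[of A h] assms by (simp_all add: cscale_def)
  have nz: "cmat_vec B (homog q) \<noteq> (0, 0)" if "cmat_vec B' (cmat_vec B (homog q)) = homog q" for B B'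
    using that homog_nonzero[of q] by force
  show "moebius_act A (moebius_act (adjugate2 A) q) = q"
    unfolding moebius_act_eq_sphere_of[of "adjugate2 A"]
    using nz[OF inv(1)] inv(1) by (simp add: moebius_act_sphere_of)
  show "moebius_act (adjugate2 A) (moebius_act A q) = q"
    unfolding moebius_act_eq_sphere_of[of A]
    using nz[OF inv(2)] inv(2) by (simp add: moebius_act_sphere_of)
qed

section \<open>Convergence on the Riemann sphere\<close>

text \<open>\<open>chart_hole b\<close> is the one point missed by \<open>sphere_chart b\<close>; elsewhere \<open>chart_coord b\<close>
  inverts the chart. \<open>chart_of p\<close> chooses a chart containing \<open>p\<close>.\<close>

definition chart_hole :: "bool \<Rightarrow> csphere" where
  "chart_hole b = (if b then Some 0 else None)"

definition chart_coord :: "bool \<Rightarrow> csphere \<Rightarrow> complex" where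
  "chart_coord b p = (case p of None \<Rightarrow> 0 | Some z \<Rightarrow> if b then 1 / z else z)"

definition chart_of :: "csphere \<Rightarrow> bool" where
  "chart_of p \<longleftrightarrow> p = None"

lemma chart_coord_simps [simp]:
  "chart_coord b None = 0" "chart_coord False (Some z) = z" "chart_coord True (Some z) = 1 / z"
  by (simp_all add: chart_coord_def)

lemma sphere_chart_chart_coord: "p \<noteq> chart_hole b \<Longrightarrow> sphere_chart b (chart_coord b p) = p"
  by (cases p; cases b) (auto simp: chart_hole_def chart_coord_def sphere_chart_def)

lemma chart_coord_sphere_chart [simp]: "chart_coord b (sphere_chart b w) = w"
  by (cases b) (auto simp: chart_coord_def sphere_chart_def)

lemma sphere_chart_neq_chart_hole [simp]: "sphere_chart b w \<noteq> chart_hole b"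
  by (cases b) (auto simp: chart_hole_def sphere_chart_def)

lemma neq_chart_hole_chart_of [simp]: "p \<noteq> chart_hole (chart_of p)"
  by (cases p) (auto simp: chart_hole_def chart_of_def)

lemma chart_hole_eq_sphere_chart: "chart_hole b = sphere_chart (\<not> b) 0"
  by (cases b) (auto simp: chart_hole_def sphere_chart_def)

lemma chart_of_chart_hole [simp]: "chart_of (chart_hole b) = (\<not> b)"
  by (simp add: chart_hole_def chart_of_def)

lemma chart_coord_chart_hole [simp]: "chart_coord (\<not> b) (chart_hole b) = 0"
  by (simp add: chart_hole_eq_sphere_chart)

lemma sphere_chart_chart_of: "sphere_chart (chart_of p) (chart_coord (chart_of p) p) = p"
  by (rule sphere_chart_chart_coord) simp

text \<open>Sequential convergence in the topology of the Riemann sphere, read in a chart around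
  the limit.\<close>

definition sphere_lim :: "(nat \<Rightarrow> csphere) \<Rightarrow> csphere \<Rightarrow> bool" where
  "sphere_lim s p \<longleftrightarrow> eventually (\<lambda>n. s n \<noteq> chart_hole (chart_of p)) sequentially \<and>
     ((\<lambda>n. chart_coord (chart_of p) (s n)) \<longlongrightarrow> chart_coord (chart_of p) p) sequentially"

lemma sphere_lim_const: "sphere_lim (\<lambda>n. p) p"
  by (simp add: sphere_lim_def)

lemma sphere_lim_chart:
  assumes "(u \<longlongrightarrow> chart_coord (chart_of p) p) sequentially"
  shows "sphere_lim (\<lambda>n. sphere_chart (chart_of p) (u n)) p"
  using assms by (simp add: sphere_lim_def)

lemma sphere_lim_sphere_of:
  assumes lim: "(h \<longlongrightarrow> k) sequentially" and k: "k \<noteq> (0, 0)"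
  shows "sphere_lim (\<lambda>n. sphere_of (h n)) (sphere_of k)"
proof -
  have fst: "((\<lambda>n. fst (h n)) \<longlongrightarrow> fst k) sequentially"
    and snd: "((\<lambda>n. snd (h n)) \<longlongrightarrow> snd k) sequentially"
    using lim by (auto intro: tendsto_fst tendsto_snd)
  show ?thesis
  proof (cases "snd k = 0")
    case False
    have ev: "eventually (\<lambda>n. snd (h n) \<noteq> 0) sequentially"
      using snd False tendsto_imp_eventually_ne by blast
    have "((\<lambda>n. fst (h n) / snd (h n)) \<longlongrightarrow> fst k / snd k) sequentially"
      using fst snd False by (intro tendsto_divide)
    moreover have "eventually (\<lambda>n. fst (h n) / snd (h n) = chart_coord False (sphere_of (h n))) sequentially"
      using ev by eventually_elim (simp add: sphere_of_def)
    ultimately have "((\<lambda>n. chart_coord False (sphere_of (h n))) \<longlongrightarrow> fst k / snd k) sequentially"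
      by (rule Lim_transform_eventually)
    moreover have "eventually (\<lambda>n. sphere_of (h n) \<noteq> None) sequentially"
      using ev by eventually_elim (simp add: sphere_of_def)
    ultimately show ?thesis
      using False by (simp add: sphere_lim_def sphere_of_def chart_of_def chart_hole_def)
  next
    case True
    then have fst_nz: "fst k \<noteq> 0"
      using k by (cases k) auto
    have ev: "eventually (\<lambda>n. fst (h n) \<noteq> 0) sequentially"
      using fst fst_nz tendsto_imp_eventually_ne by blast
    have "((\<lambda>n. snd (h n) / fst (h n)) \<longlongrightarrow> 0) sequentially"
      using tendsto_divide[OF snd fst fst_nz] True by simp
    moreover have "eventually (\<lambda>n. snd (h n) / fst (h n) = chart_coord True (sphere_of (h n))) sequentially"
      using ev by eventually_elim (simp add: sphere_of_def chart_coord_def)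
    ultimately have "((\<lambda>n. chart_coord True (sphere_of (h n))) \<longlongrightarrow> 0) sequentially"
      by (rule Lim_transform_eventually)
    moreover have "eventually (\<lambda>n. sphere_of (h n) \<noteq> Some 0) sequentially"
      using ev by eventually_elim (simp add: sphere_of_def)
    ultimately show ?thesis
      using True by (simp add: sphere_lim_def sphere_of_def chart_of_def chart_hole_def chart_coord_def)
  qed
qed

lemma sphere_lim_eventually_neq:
  assumes lim: "sphere_lim s p" and "q \<noteq> p"
  shows "eventually (\<lambda>n. s n \<noteq> q) sequentially"
proof (cases "q = chart_hole (chart_of p)")
  case True
  then show ?thesis using lim by (simp add: sphere_lim_def)
next
  case False
  have "chart_coord (chart_of p) q \<noteq> chart_coord (chart_of p) p"
  proof
    assume "chart_coord (chart_of p) q = chart_coord (chart_of p) p"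
    then have "sphere_chart (chart_of p) (chart_coord (chart_of p) q) = sphere_chart (chart_of p) (chart_coord (chart_of p) p)"
      by simp
    then show False
      using sphere_chart_chart_coord[OF False] \<open>q \<noteq> p\<close> by (simp add: sphere_chart_chart_of)
  qed
  moreover have "((\<lambda>n. chart_coord (chart_of p) (s n)) \<longlongrightarrow> chart_coord (chart_of p) p) sequentially"
    using lim by (simp add: sphere_lim_def)
  ultimately have "eventually (\<lambda>n. chart_coord (chart_of p) (s n) \<noteq> chart_coord (chart_of p) q) sequentially"
    by (intro tendsto_imp_eventually_ne) auto
  then show ?thesis by (rule eventually_mono) auto
qed

lemma not_sphere_lim_Some_and_None:
  assumes s1: "sphere_lim s (Some z)" and s2: "sphere_lim s None"
  shows False
proof -
  text \<open>The two chart coordinates of \<open>s n\<close> would tend to \<open>z\<close> and to \<open>0\<close>, but their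
    product is eventually \<open>1\<close>.\<close>
  have ev: "eventually (\<lambda>n. s n \<noteq> None) sequentially" "eventually (\<lambda>n. s n \<noteq> Some 0) sequentially"
    using s1 s2 unfolding sphere_lim_def by (simp_all add: chart_of_def chart_hole_def)
  have "((\<lambda>n. chart_coord False (s n)) \<longlongrightarrow> z) sequentially"
    "((\<lambda>n. chart_coord True (s n)) \<longlongrightarrow> 0) sequentially"
    using s1 s2 unfolding sphere_lim_def by (simp_all add: chart_of_def)
  then have "((\<lambda>n. chart_coord False (s n) * chart_coord True (s n)) \<longlongrightarrow> z * 0) sequentially"
    by (rule tendsto_mult)
  moreover have "eventually (\<lambda>n. chart_coord False (s n) * chart_coord True (s n) = 1) sequentially"
    using ev
  proof (rule eventually_elim2)
    fix n assume "s n \<noteq> None" "s n \<noteq> Some 0"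
    then show "chart_coord False (s n) * chart_coord True (s n) = 1"
      by (cases "s n") auto
  qed
  ultimately have "((\<lambda>n. 1::complex) \<longlongrightarrow> z * 0) sequentially"
    by (rule Lim_transform_eventually)
  then show False
    by (simp add: LIMSEQ_const_iff)
qed

lemma sphere_lim_unique:
  assumes "sphere_lim s p" "sphere_lim s q"
  shows "p = q"
proof (cases "chart_of p = chart_of q")
  case True
  then have "((\<lambda>n. chart_coord (chart_of p) (s n)) \<longlongrightarrow> chart_coord (chart_of p) p) sequentially"
    "((\<lambda>n. chart_coord (chart_of p) (s n)) \<longlongrightarrow> chart_coord (chart_of p) q) sequentially"
    using assms by (simp_all add: sphere_lim_def)
  then have "chart_coord (chart_of p) p = chart_coord (chart_of p) q"
    by (rule LIMSEQ_unique)
  then have "sphere_chart (chart_of p) (chart_coord (chart_of p) p) = sphere_chart (chart_of q) (chart_coord (chart_of q) q)"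
    using True by simp
  then show ?thesis
    by (simp add: sphere_chart_chart_of)
next
  case False
  then consider z where "p = Some z" "q = None" | z where "q = Some z" "p = None"
    by (cases p; cases q) (auto simp: chart_of_def)
  then show ?thesis
  proof cases
    case 1
    then show ?thesis using not_sphere_lim_Some_and_None assms by simp
  next
    case 2
    then show ?thesis using not_sphere_lim_Some_and_None assms by simp
  qed
qed

lemma sphere_lim_subseq:
  assumes r: "strict_mono r" and lim: "sphere_lim s p"
  shows "sphere_lim (s \<circ> r) p"
proof -
  have "eventually (\<lambda>n. s (r n) \<noteq> chart_hole (chart_of p)) sequentially"
    using eventually_subseq[OF r] lim unfolding sphere_lim_def by blast
  moreover have "((\<lambda>n. chart_coord (chart_of p) (s (r n))) \<longlongrightarrow> chart_coord (chart_of p) p) sequentially"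
    using LIMSEQ_subseq_LIMSEQ[OF _ r] lim unfolding sphere_lim_def o_def by blast
  ultimately show ?thesis
    by (simp add: sphere_lim_def)
qed

lemma sphere_lim_if:
  assumes "sphere_lim s p" "sphere_lim t p"
  shows "sphere_lim (\<lambda>n. if P n then s n else t n) p"
proof -
  have "eventually (\<lambda>n. s n \<noteq> chart_hole (chart_of p)) sequentially"
    "eventually (\<lambda>n. t n \<noteq> chart_hole (chart_of p)) sequentially"
    using assms unfolding sphere_lim_def by blast+
  then have "eventually (\<lambda>n. (if P n then s n else t n) \<noteq> chart_hole (chart_of p)) sequentially"
    by (rule eventually_elim2) simp
  moreover have "((\<lambda>n. chart_coord (chart_of p) (if P n then s n else t n))
      \<longlongrightarrow> chart_coord (chart_of p) p) sequentially"
  proof (rule topological_tendstoI)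
    fix S assume "open S" "chart_coord (chart_of p) p \<in> S"
    then have "eventually (\<lambda>n. chart_coord (chart_of p) (s n) \<in> S) sequentially"
      "eventually (\<lambda>n. chart_coord (chart_of p) (t n) \<in> S) sequentially"
      using assms unfolding sphere_lim_def by (auto simp: tendsto_def)
    then show "eventually (\<lambda>n. chart_coord (chart_of p) (if P n then s n else t n) \<in> S) sequentially"
      by (rule eventually_elim2) auto
  qed
  ultimately show ?thesis
    unfolding sphere_lim_def by blast
qed

lemma sphere_lim_avoiding:
  assumes "sphere_lim s l" "sphere_lim t l" "\<And>n. s n \<noteq> t n"
  obtains w where "\<And>n. w n = s n \<or> w n = t n" "\<And>n. w n \<noteq> l" "sphere_lim w l"
proof (rule that)
  show "sphere_lim (\<lambda>n. if s n \<noteq> l then s n else t n) l"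
    using assms(1,2) by (rule sphere_lim_if)
  show "(if s n \<noteq> l then s n else t n) \<noteq> l" for n
    using assms(3)[of n] by auto
qed auto

lemma sphere_lim_Some: "(f \<longlongrightarrow> x) sequentially \<Longrightarrow> sphere_lim (\<lambda>n. Some (f n)) (Some x)"
  using sphere_lim_chart[of f "Some x"] by (simp add: chart_of_def sphere_chart_def)

lemma sphere_lim_None:
  assumes "filterlim (\<lambda>n. norm (f n)) at_top sequentially"
  shows "sphere_lim (\<lambda>n. Some (f n)) None"
proof -
  have "eventually (\<lambda>n. norm (f n) \<ge> 1) sequentially"
    using assms by (simp add: filterlim_at_top)
  then have "eventually (\<lambda>n. Some (f n) \<noteq> Some 0) sequentially"
    by (rule eventually_mono) auto
  moreover have "((\<lambda>n. inverse (norm (f n))) \<longlongrightarrow> 0) sequentially"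
    using assms by (rule tendsto_inverse_0_at_top)
  then have "((\<lambda>n. norm (1 / f n)) \<longlongrightarrow> 0) sequentially"
    by (simp add: norm_inverse divide_inverse)
  then have "((\<lambda>n. chart_coord True (Some (f n))) \<longlongrightarrow> 0) sequentially"
    by (simp add: tendsto_norm_zero_cancel)
  ultimately show ?thesis
    unfolding sphere_lim_def by (simp add: chart_of_def chart_hole_def)
qed

lemma sphere_lim_islimpt_chart:
  assumes lim: "sphere_lim w x" and wx: "\<And>n. w n \<noteq> x"
    and P: "eventually (\<lambda>n. P (w n)) sequentially"
  shows "chart_coord (chart_of x) x islimpt {v. P (sphere_chart (chart_of x) v)}"
proof -
  define b where "b = chart_of x"
  have "eventually (\<lambda>n. w n \<noteq> chart_hole b \<and> P (w n)) sequentially"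
    using lim P unfolding sphere_lim_def b_def by (simp add: eventually_conj_iff)
  then obtain N where N: "\<And>n. n \<ge> N \<Longrightarrow> w n \<noteq> chart_hole b \<and> P (w n)"
    unfolding eventually_sequentially by blast
  have w_chart: "sphere_chart b (chart_coord b (w (n + N))) = w (n + N)" for n
    using N[of "n + N"] by (simp add: sphere_chart_chart_coord)
  have x_chart: "sphere_chart b (chart_coord b x) = x"
    unfolding b_def by (rule sphere_chart_chart_of)
  have "chart_coord b (w (n + N)) \<noteq> chart_coord b x" for n
    using arg_cong[where f = "sphere_chart b"] w_chart[of n] x_chart wx[of "n + N"] by metis
  moreover have "((\<lambda>n. chart_coord b (w (n + N))) \<longlongrightarrow> chart_coord b x) sequentially"
    using LIMSEQ_ignore_initial_segment lim unfolding sphere_lim_def b_def by blast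
  ultimately show ?thesis
    unfolding islimpt_sequential b_def[symmetric] using N w_chart
    by (intro exI[of _ "\<lambda>n. chart_coord b (w (n + N))"]) auto
qed

lemma holomorphic_on_G_tendsto:
  assumes F: "holomorphic_on_G F" and pq: "(p, q) \<in> G_dom"
    and s: "sphere_lim s p" and t: "sphere_lim t q"
  shows "((\<lambda>n. F (s n, t n)) \<longlongrightarrow> F (p, q)) sequentially"
proof -
  define a b where "a = chart_of p" and "b = chart_of q"
  define g where "g = (\<lambda>(z, w). F (sphere_chart a z, sphere_chart b w))"
  have pq_chart: "sphere_chart a (chart_coord a p) = p" "sphere_chart b (chart_coord b q) = q"
    unfolding a_def b_def by (rule sphere_chart_chart_of)+
  have "holomorphic2_on g {(z, w). (sphere_chart a z, sphere_chart b w) \<in> G_dom}"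
    using F unfolding holomorphic_on_G_def g_def by blast
  then obtain c1 c2 where "(g has_derivative (\<lambda>(u, v). c1 * u + c2 * v)) (at (chart_coord a p, chart_coord b q))"
    using pq pq_chart unfolding holomorphic2_on_def by fastforce
  then have cont: "isCont g (chart_coord a p, chart_coord b q)"
    by (rule has_derivative_continuous)
  have "((\<lambda>n. (chart_coord a (s n), chart_coord b (t n))) \<longlongrightarrow> (chart_coord a p, chart_coord b q)) sequentially"
    using s t unfolding sphere_lim_def a_def b_def by (intro tendsto_Pair) blast+
  then have "((\<lambda>n. g (chart_coord a (s n), chart_coord b (t n))) \<longlongrightarrow> g (chart_coord a p, chart_coord b q)) sequentially"
    by (rule isCont_tendsto_compose[OF cont])
  moreover have "eventually (\<lambda>n. g (chart_coord a (s n), chart_coord b (t n)) = F (s n, t n)) sequentially"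
  proof -
    have "eventually (\<lambda>n. s n \<noteq> chart_hole a) sequentially" "eventually (\<lambda>n. t n \<noteq> chart_hole b) sequentially"
      using s t unfolding sphere_lim_def a_def b_def by blast+
    then show ?thesis
      by (rule eventually_elim2) (simp add: g_def sphere_chart_chart_coord)
  qed
  ultimately have "((\<lambda>n. F (s n, t n)) \<longlongrightarrow> g (chart_coord a p, chart_coord b q)) sequentially"
    by (rule Lim_transform_eventually)
  then show ?thesis
    by (simp add: g_def pq_chart)
qed

section \<open>North-south dynamics\<close>

lemma fuchsian_finite_norm_le:
  assumes G: "fuchsian \<Gamma>"
  shows "finite {A\<in>\<Gamma>. norm A \<le> R}"
proof (rule ccontr)
  assume "infinite {A\<in>\<Gamma>. norm A \<le> R}"
  then obtain f :: "nat \<Rightarrow> real^2^2" where f: "inj f" "range f \<subseteq> {A\<in>\<Gamma>. norm A \<le> R}"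
    using infinite_countable_subset by blast
  then have fG: "f n \<in> \<Gamma>" for n by auto
  have "seq_compact (cball (0::real^2^2) R)"
    by (rule compact_imp_seq_compact) simp
  moreover have "\<forall>n. f n \<in> cball 0 R"
    using f(2) by auto
  ultimately obtain B r where r: "strict_mono r" "((f \<circ> r) \<longlongrightarrow> B) sequentially"
    unfolding seq_compact_def by blast
  have "((\<lambda>n. det ((f \<circ> r) n)) \<longlongrightarrow> det B) sequentially"
    by (rule tendsto_det2[OF r(2)])
  then have "det B = 1"
    using fuchsian_det[OF G fG] by (simp add: LIMSEQ_const_iff)
  text \<open>Quotients of consecutive terms lie in \<open>\<Gamma>\<close> and tend to the identity, which is isolated.\<close>
  define C where "C n = adjugate2 (f (r n)) ** f (r (Suc n))" for n
  have "(C \<longlongrightarrow> adjugate2 B ** B) sequentially"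
    unfolding C_def using tendsto_adjugate2[OF r(2)] LIMSEQ_Suc[OF r(2)]
    by (auto intro: tendsto_matrix_mult2)
  then have C_lim: "(C \<longlongrightarrow> mat 1) sequentially"
    using adjugate2_mult(1)[OF \<open>det B = 1\<close>] by simp
  obtain e where e: "e > 0" "\<And>X. X \<in> \<Gamma> \<Longrightarrow> dist X (mat 1) < e \<Longrightarrow> X = mat 1"
    using G unfolding fuchsian_def by blast
  obtain N where "dist (C N) (mat 1) < e"
    using C_lim e(1) by (meson LIMSEQ_iff_nz dist_norm le_refl)
  moreover have "C N \<in> \<Gamma>"
    unfolding C_def by (intro fuchsian_mult[OF G] fuchsian_adjugate2[OF G] fG)
  ultimately have "C N = mat 1"
    using e(2) by blast
  then have "adjugate2 (f (r N)) ** f (r (Suc N)) = mat 1"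
    by (simp add: C_def)
  then have "f (r N) ** (adjugate2 (f (r N)) ** f (r (Suc N))) = f (r N)"
    by simp
  then have "f (r (Suc N)) = f (r N)"
    using adjugate2_mult(2)[OF fuchsian_det[OF G fG]] by (simp add: matrix_mul_assoc)
  then have "r (Suc N) = r N"
    using f(1) by (simp add: inj_eq)
  then show False
    using strict_monoD[OF r(1), of N "Suc N"] by simp
qed

lemma fuchsian_norm_filterlim_at_top:
  assumes G: "fuchsian \<Gamma>" and AG: "\<And>n. A n \<in> \<Gamma>" and fib: "\<And>B. finite {n. A n = B}"
  shows "filterlim (\<lambda>n. norm (A n)) at_top sequentially"
  unfolding filterlim_at_top
proof
  fix Z
  have "{n. \<not> Z \<le> norm (A n)} \<subseteq> (\<Union>B\<in>{B\<in>\<Gamma>. norm B \<le> Z}. {n. A n = B})"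
    using AG by fastforce
  moreover have "finite (\<Union>B\<in>{B\<in>\<Gamma>. norm B \<le> Z}. {n. A n = B})"
    using fuchsian_finite_norm_le[OF G] fib by blast
  ultimately have "finite {n. \<not> Z \<le> norm (A n)}"
    by (rule finite_subset)
  then show "eventually (\<lambda>n. Z \<le> norm (A n)) sequentially"
    unfolding cofinite_eq_sequentially[symmetric] eventually_cofinite .
qed

lemma normalized_subseq_tendsto_singular:
  fixes A :: "nat \<Rightarrow> real^2^2"
  assumes lim: "filterlim (\<lambda>n. norm (A n)) at_top sequentially" and det: "\<And>n. det (A n) = 1"
  obtains r M where "strict_mono r" "((\<lambda>n. (1 / norm (A (r n))) *\<^sub>R A (r n)) \<longlongrightarrow> M) sequentially"
    "norm M = 1" "det M = 0"
proof -
  have nz: "A n \<noteq> 0" for n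
    using det[of n] by (auto simp: det_2)
  define N where "N n = (1 / norm (A n)) *\<^sub>R A n" for n
  have "N n \<in> sphere 0 1" for n
    using nz[of n] by (simp add: N_def)
  moreover have "seq_compact (sphere (0::real^2^2) 1)"
    by (rule compact_imp_seq_compact) simp
  ultimately obtain M r where r: "strict_mono r" "M \<in> sphere 0 1" "((N \<circ> r) \<longlongrightarrow> M) sequentially"
    unfolding seq_compact_def by metis
  have "((\<lambda>n. det ((N \<circ> r) n)) \<longlongrightarrow> det M) sequentially"
    by (rule tendsto_det2[OF r(3)])
  moreover have "(\<lambda>n. det ((N \<circ> r) n)) = (\<lambda>n. (inverse (norm (A (r n))))^2)"
    by (simp add: N_def det2_scaleR det fun_eq_iff divide_inverse)
  moreover have "((\<lambda>n. (inverse (norm (A (r n))))^2) \<longlongrightarrow> 0^2) sequentially"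
  proof -
    have "filterlim (\<lambda>n. norm (A (r n))) at_top sequentially"
      using filterlim_compose[OF lim filterlim_subseq[OF r(1)]] by (simp add: o_def)
    then show ?thesis
      by (intro tendsto_intros tendsto_inverse_0_at_top)
  qed
  ultimately have "det M = 0^2"
    using LIMSEQ_unique by metis
  then show ?thesis
    using that r by (simp add: N_def o_def)
qed

lemma moebius_act_sphere_lim:
  assumes "((\<lambda>n. c n *\<^sub>R A n) \<longlongrightarrow> M) sequentially" "\<And>n. c n \<noteq> 0"
    and "cmat_vec M (homog z) \<noteq> (0, 0)"
  shows "sphere_lim (\<lambda>n. moebius_act (A n) z) (sphere_of (cmat_vec M (homog z)))"
proof -
  have "moebius_act (A n) z = sphere_of (cmat_vec (c n *\<^sub>R A n) (homog z))" for n
    using moebius_act_scaleR assms(2) by blast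
  then show ?thesis
    using sphere_lim_sphere_of[OF tendsto_cmat_vec[OF assms(1)] assms(3)] by simp
qed

lemma moebius_act_sphere_lim_rank_one:
  assumes lim: "((\<lambda>n. c n *\<^sub>R A n) \<longlongrightarrow> M) sequentially" "\<And>n. c n \<noteq> 0"
    and M: "\<And>h. cmat_vec M h = cscale (a * fst h + b * snd h) U"
    and ab: "(a, b) \<noteq> (0, 0)" and U: "U \<noteq> (0, 0)"
    and z: "z \<noteq> sphere_of (b, - a)"
  shows "sphere_lim (\<lambda>n. moebius_act (A n) z) (sphere_of U)"
proof -
  define t where "t = a * fst (homog z) + b * snd (homog z)"
  have "fst (homog z) * (- a) - snd (homog z) * b = - t"
    by (simp add: t_def algebra_simps)
  moreover have "(b, - a) \<noteq> (0, 0)"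
    using ab by auto
  ultimately have "t \<noteq> 0"
    using z sphere_of_eq_iff[OF homog_nonzero, of "(b, - a)" z] by auto
  then show ?thesis
    using moebius_act_sphere_lim[OF lim, of z] U by (simp add: M t_def[symmetric] sphere_of_cscale)
qed

text \<open>North-south dynamics: a normalized limit \<open>M = u v\<^sup>T\<close> of \<open>A n\<close> has rank one, so \<open>A n\<close>
  pushes every point except the repeller \<open>[v\<^sup>\<perp>]\<close> to the attractor \<open>[u]\<close>, and the inverses
  do the reverse, as \<open>adjugate2 M = v\<^sup>\<perp> (u\<^sup>\<perp>)\<^sup>T\<close>.\<close>

lemma fuchsian_north_south:
  fixes A :: "nat \<Rightarrow> real^2^2"
  assumes G: "fuchsian \<Gamma>" and AG: "\<And>n. A n \<in> \<Gamma>" and fib: "\<And>B. finite {n. A n = B}"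
  obtains r Y X where "strict_mono r"
    "\<And>z. z \<noteq> Y \<Longrightarrow> sphere_lim (\<lambda>n. moebius_act (A (r n)) z) X"
    "\<And>q. q \<noteq> X \<Longrightarrow> sphere_lim (\<lambda>n. moebius_act (adjugate2 (A (r n))) q) Y"
    "Y \<noteq> Some \<i>"
proof -
  have det: "det (A n) = 1" for n
    using fuchsian_det[OF G AG] .
  obtain r M where r: "strict_mono r" "((\<lambda>n. (1 / norm (A (r n))) *\<^sub>R A (r n)) \<longlongrightarrow> M) sequentially"
      "norm M = 1" "det M = 0"
    using normalized_subseq_tendsto_singular[OF fuchsian_norm_filterlim_at_top[OF G AG fib] det] .
  have nz: "1 / norm (A (r n)) \<noteq> 0" for n
    using det[of "r n"] by (auto simp: det_2)
  have "M \<noteq> 0"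
    using r(3) by auto
  obtain u1 u2 v1 v2 :: real where uv: "u1 \<noteq> 0 \<or> u2 \<noteq> 0" "v1 \<noteq> 0 \<or> v2 \<noteq> 0"
     "M$1$1 = u1 * v1" "M$1$2 = u1 * v2" "M$2$1 = u2 * v1" "M$2$2 = u2 * v2"
    by (rule det2_eq_0_rank_one[OF r(4) \<open>M \<noteq> 0\<close>])
  define U V where "U = (complex_of_real u1, complex_of_real u2)"
    and "V = (complex_of_real v2, - complex_of_real v1)"
  have UV: "U \<noteq> (0, 0)" "V \<noteq> (0, 0)"
    using uv(1,2) by (auto simp: U_def V_def)
  have "sphere_lim (\<lambda>n. moebius_act (A (r n)) z) (sphere_of U)" if "z \<noteq> sphere_of V" for z
    using uv(2) UV(1) that unfolding V_def
    by (intro moebius_act_sphere_lim_rank_one[OF r(2) nz])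
       (auto simp: cmat_vec_def cscale_def U_def uv algebra_simps)
  moreover have "sphere_lim (\<lambda>n. moebius_act (adjugate2 (A (r n))) q) (sphere_of V)"
    if "q \<noteq> sphere_of U" for q
  proof (rule moebius_act_sphere_lim_rank_one)
    show "((\<lambda>n. (1 / norm (A (r n))) *\<^sub>R adjugate2 (A (r n))) \<longlongrightarrow> adjugate2 M) sequentially"
      using tendsto_adjugate2[OF r(2)] by (simp add: adjugate2_scaleR)
    show "cmat_vec (adjugate2 M) h = cscale (of_real u2 * fst h + - of_real u1 * snd h) V" for h
      by (simp add: cmat_vec_def cscale_def V_def uv algebra_simps)
    show "q \<noteq> sphere_of (- of_real u1, - (of_real u2))"
      using that by (simp add: U_def sphere_of_uminus)
  qed (use nz uv(1) UV(2) in auto)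
  moreover have "sphere_of V \<noteq> Some \<i>"
    using sphere_of_real_neq_i[of v2 "- v1"] by (simp add: V_def)
  ultimately show ?thesis
    using that r(1) by blast
qed

lemma limit_set_obtain_orbit_seq:
  assumes "l \<in> limit_set \<Gamma>"
  obtains f :: "nat \<Rightarrow> complex" where "\<And>n. f n \<in> orbit_i \<Gamma>" "\<And>v. finite {n. f n = v}" "sphere_lim (\<lambda>n. Some (f n)) l"
proof (cases l)
  case (Some x)
  then have "x islimpt orbit_i \<Gamma>"
    using assms by (auto simp: limit_set_def split: if_splits)
  then obtain f where f: "\<And>n. f n \<in> orbit_i \<Gamma> - {x}" "(f \<longlongrightarrow> x) sequentially"
    unfolding islimpt_sequential by blast
  have fin: "finite {n. f n = v}" for v
  proof (cases "v = x")
    case False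
    then have "eventually (\<lambda>n. f n \<noteq> v) sequentially"
      using tendsto_imp_eventually_ne[OF f(2)] by metis
    then show ?thesis
      unfolding cofinite_eq_sequentially[symmetric] eventually_cofinite by simp
  qed (use f(1) in auto)
  show ?thesis
  proof (rule that)
    show "f n \<in> orbit_i \<Gamma>" for n
      using f(1) by blast
    show "sphere_lim (\<lambda>n. Some (f n)) l"
      using sphere_lim_Some[OF f(2)] Some by simp
  qed (rule fin)
next
  case None
  then have "\<not> bounded (orbit_i \<Gamma>)"
    using assms by (auto simp: limit_set_def split: if_splits)
  then have "\<forall>n::nat. \<exists>z\<in>orbit_i \<Gamma>. real n < norm z"
    unfolding bounded_iff by (meson not_le)
  then obtain f where f: "\<And>n. f n \<in> orbit_i \<Gamma>" "\<And>n. real n < norm (f n)"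
    by metis
  have lim: "filterlim (\<lambda>n. norm (f n)) at_top sequentially"
    by (rule filterlim_at_top_mono[OF filterlim_real_sequentially])
       (use f(2) in \<open>auto intro!: always_eventually less_imp_le\<close>)
  show ?thesis
  proof (rule that[OF f(1)])
    show "finite {n. f n = v}" for v
    proof (rule finite_subset)
      show "{n. f n = v} \<subseteq> {..<nat \<lceil>norm v\<rceil>}"
        using f(2) by (auto simp: zless_nat_eq_int_zless less_ceiling_iff)
    qed simp
    show "sphere_lim (\<lambda>n. Some (f n)) l"
      using sphere_lim_None[OF lim] None by simp
  qed
qed

lemma limit_point_north_south:
  assumes G: "fuchsian \<Gamma>" and l: "l \<in> limit_set \<Gamma>"
  obtains B Y where "\<And>n. B n \<in> \<Gamma>" "\<And>z. z \<noteq> Y \<Longrightarrow> sphere_lim (\<lambda>n. moebius_act (B n) z) l"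
    "\<And>q. q \<noteq> l \<Longrightarrow> sphere_lim (\<lambda>n. moebius_act (adjugate2 (B n)) q) Y"
proof -
  obtain f :: "nat \<Rightarrow> complex" where f: "\<And>n. f n \<in> orbit_i \<Gamma>" "\<And>v. finite {n. f n = v}" "sphere_lim (\<lambda>n. Some (f n)) l"
    using limit_set_obtain_orbit_seq[OF l] by blast
  have "\<forall>n. \<exists>A\<in>\<Gamma>. moebius_act A (Some \<i>) = Some (f n)"
    using f(1) by (simp add: orbit_i_def)
  then obtain A where A: "\<And>n. A n \<in> \<Gamma>" "\<And>n. moebius_act (A n) (Some \<i>) = Some (f n)"
    by metis
  have fib: "finite {n. A n = B}" for B
  proof (rule finite_subset)
    show "{n. A n = B} \<subseteq> {n. f n = the (moebius_act B (Some \<i>))}"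
      using A(2) by force
  qed (rule f(2))
  obtain r Y X where r: "strict_mono r"
    "\<And>z. z \<noteq> Y \<Longrightarrow> sphere_lim (\<lambda>n. moebius_act (A (r n)) z) X"
    "\<And>q. q \<noteq> X \<Longrightarrow> sphere_lim (\<lambda>n. moebius_act (adjugate2 (A (r n))) q) Y" "Y \<noteq> Some \<i>"
    by (rule fuchsian_north_south[OF G A(1) fib]) blast
  have "sphere_lim (\<lambda>n. moebius_act (A (r n)) (Some \<i>)) X"
    using r(2) r(4) by simp
  moreover have "sphere_lim (\<lambda>n. moebius_act (A (r n)) (Some \<i>)) l"
    using sphere_lim_subseq[OF r(1) f(3)] by (simp add: A(2) o_def)
  ultimately have "X = l"
    by (rule sphere_lim_unique)
  then show ?thesis
    using that[of "\<lambda>n. A (r n)" Y] A(1) r(2,3) by simp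
qed

section \<open>Invariant holomorphic functions\<close>

lemma invariant_limit_swap:
  assumes F: "holomorphic_on_G F"
    and inv: "\<And>n z w. z \<noteq> w \<Longrightarrow> F (moebius_act (P n) z, moebius_act (P n) w) = F (z, w)"
    and PQ: "\<And>n. moebius_act (P n) (moebius_act (Q n) q) = q"
    and Pz: "sphere_lim (\<lambda>n. moebius_act (P n) z) X"
    and Qq: "sphere_lim (\<lambda>n. moebius_act (Q n) q) Y"
    and "z \<noteq> Y" "q \<noteq> X"
  shows "F (z, Y) = F (X, q)"
proof -
  text \<open>\<open>F (z, Q n q) = F (P n z, q)\<close>; let \<open>n \<rightarrow> \<infinity>\<close> on both sides.\<close>
  have "eventually (\<lambda>n. moebius_act (Q n) q \<noteq> z) sequentially"
    using sphere_lim_eventually_neq[OF Qq] \<open>z \<noteq> Y\<close> by blast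
  then have "eventually (\<lambda>n. F (z, moebius_act (Q n) q) = F (moebius_act (P n) z, q)) sequentially"
    by (rule eventually_mono) (metis inv PQ)
  moreover have "((\<lambda>n. F (z, moebius_act (Q n) q)) \<longlongrightarrow> F (z, Y)) sequentially"
    using holomorphic_on_G_tendsto[OF F _ sphere_lim_const Qq] \<open>z \<noteq> Y\<close> by (simp add: G_dom_def)
  ultimately have "((\<lambda>n. F (moebius_act (P n) z, q)) \<longlongrightarrow> F (z, Y)) sequentially"
    by (rule Lim_transform_eventually[rotated])
  moreover have "((\<lambda>n. F (moebius_act (P n) z, q)) \<longlongrightarrow> F (X, q)) sequentially"
    using holomorphic_on_G_tendsto[OF F _ Pz sphere_lim_const] \<open>q \<noteq> X\<close> by (simp add: G_dom_def)
  ultimately show ?thesis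
    by (rule LIMSEQ_unique)
qed

lemma limit_point_slices_const:
  assumes G: "fuchsian \<Gamma>" and F: "holomorphic_on_G F"
    and inv: "\<forall>A\<in>\<Gamma>. \<forall>z w. z \<noteq> w \<longrightarrow> F (moebius_act A z, moebius_act A w) = F (z, w)"
    and l: "l \<in> limit_set \<Gamma>"
  shows "q \<noteq> l \<Longrightarrow> q' \<noteq> l \<Longrightarrow> F (l, q) = F (l, q')"
    and "z \<noteq> l \<Longrightarrow> z' \<noteq> l \<Longrightarrow> F (z, l) = F (z', l)"
proof -
  obtain B Y where B: "\<And>n. B n \<in> \<Gamma>" "\<And>z. z \<noteq> Y \<Longrightarrow> sphere_lim (\<lambda>n. moebius_act (B n) z) l"
    "\<And>q. q \<noteq> l \<Longrightarrow> sphere_lim (\<lambda>n. moebius_act (adjugate2 (B n)) q) Y"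
    using limit_point_north_south[OF G l] by blast
  have det: "det (B n) = 1" for n
    using fuchsian_det[OF G B(1)] .
  have "\<exists>p::csphere. p \<noteq> Y"
    by (cases Y) auto
  then obtain p where "p \<noteq> Y" ..
  have row: "F (l, q) = F (p, Y)" if "q \<noteq> l" for q
    using invariant_limit_swap[OF F inv[rule_format, OF B(1)] moebius_act_adjugate2(1)[OF det] B(2)[OF \<open>p \<noteq> Y\<close>] B(3)[OF that]]
      \<open>p \<noteq> Y\<close> that by simp
  have col: "F (z, l) = F (Y, p)" if "z \<noteq> l" for z
    using invariant_limit_swap[OF F inv[rule_format, OF fuchsian_adjugate2[OF G B(1)]] moebius_act_adjugate2(2)[OF det]
        B(3)[OF that] B(2)[OF \<open>p \<noteq> Y\<close>]] \<open>p \<noteq> Y\<close> that by simp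
  show "q \<noteq> l \<Longrightarrow> q' \<noteq> l \<Longrightarrow> F (l, q) = F (l, q')"
    using row by simp
  show "z \<noteq> l \<Longrightarrow> z' \<noteq> l \<Longrightarrow> F (z, l) = F (z', l)"
    using col by simp
qed

lemma slice_holomorphic:
  assumes F: "holomorphic_on_G F"
  shows "(\<lambda>w. F (z, sphere_chart b w)) holomorphic_on {w. sphere_chart b w \<noteq> z}"
  unfolding holomorphic_on_def field_differentiable_def
proof
  fix w assume w: "w \<in> {w. sphere_chart b w \<noteq> z}"
  define a \<zeta> where "a = chart_of z" and "\<zeta> = chart_coord (chart_of z) z"
  define g where "g = (\<lambda>(u, w). F (sphere_chart a u, sphere_chart b w))"
  have z: "sphere_chart a \<zeta> = z"
    unfolding a_def \<zeta>_def by (rule sphere_chart_chart_of)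
  have "holomorphic2_on g {(u, w). (sphere_chart a u, sphere_chart b w) \<in> G_dom}"
    using F unfolding holomorphic_on_G_def g_def by blast
  moreover have "(\<zeta>, w) \<in> {(u, w). (sphere_chart a u, sphere_chart b w) \<in> G_dom}"
    using w z by (auto simp: G_dom_def)
  ultimately obtain c1 c2 where "(g has_derivative (\<lambda>(u, v). c1 * u + c2 * v)) (at (\<zeta>, w))"
    unfolding holomorphic2_on_def by blast
  moreover have "((\<lambda>w. (\<zeta>, w)) has_derivative (\<lambda>h. (0, h))) (at w)"
    by (intro derivative_eq_intros) auto
  ultimately have "((\<lambda>w. g (\<zeta>, w)) has_derivative (\<lambda>h. c2 * h)) (at w)"
    using has_derivative_compose by fastforce
  then have "((\<lambda>w. F (z, sphere_chart b w)) has_field_derivative c2) (at w)"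
    unfolding has_field_derivative_def by (simp add: g_def z)
  then show "\<exists>f'. ((\<lambda>w. F (z, sphere_chart b w)) has_field_derivative f')
      (at w within {w. sphere_chart b w \<noteq> z})"
    using has_field_derivative_at_within by blast
qed

lemma open_connected_sphere_chart_neq:
  "open {w. sphere_chart b w \<noteq> p} \<and> connected {w. sphere_chart b w \<noteq> p}"
proof -
  have "{w. sphere_chart b w = p} \<subseteq> {chart_coord b p}"
    by auto
  then have fin: "finite {w. sphere_chart b w = p}"
    by (rule finite_subset) simp
  have eq: "{w. sphere_chart b w \<noteq> p} = UNIV - {w. sphere_chart b w = p}"
    by auto
  show ?thesis
    unfolding eq
    by (intro conjI open_Diff connected_open_diff_countable finite_imp_closed countable_finite fin)
       (auto simp: DIM_complex)
qed

lemma slice_eq_if_islimpt: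
  assumes F: "holomorphic_on_G F"
    and \<xi>: "sphere_chart b \<xi> \<noteq> z"
    and lim: "\<xi> islimpt {v. sphere_chart b v \<noteq> z \<and> F (z, sphere_chart b v) = c}"
    and w: "sphere_chart b w \<noteq> z"
  shows "F (z, sphere_chart b w) = c"
proof -
  have "F (z, sphere_chart b w) - c = 0"
  proof (rule analytic_continuation[of "\<lambda>v. F (z, sphere_chart b v) - c" "{v. sphere_chart b v \<noteq> z}"])
    show "(\<lambda>v. F (z, sphere_chart b v) - c) holomorphic_on {v. sphere_chart b v \<noteq> z}"
      by (intro holomorphic_intros slice_holomorphic[OF F])
  qed (use open_connected_sphere_chart_neq[of b z] \<xi> lim w in auto)
  then show ?thesis
    by simp
qed

lemma slice_eq_at_chart_hole:
  assumes F: "holomorphic_on_G F"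
    and eq: "\<And>v. sphere_chart b v \<noteq> z \<Longrightarrow> F (z, sphere_chart b v) = c"
    and hole: "chart_hole b \<noteq> z"
  shows "F (z, chart_hole b) = c"
proof -
  define s where "s n = sphere_chart (\<not> b) (1 / of_nat (Suc n))" for n
  have "((\<lambda>n. 1 / of_nat (Suc n) :: complex) \<longlongrightarrow> chart_coord (chart_of (chart_hole b)) (chart_hole b)) sequentially"
    using LIMSEQ_Suc[OF lim_1_over_n[where 'a=complex]] by simp
  then have s: "sphere_lim s (chart_hole b)"
    unfolding s_def using sphere_lim_chart by fastforce
  have not_hole: "s n \<noteq> chart_hole b" for n
  proof
    assume "s n = chart_hole b"
    then have "chart_coord (\<not> b) (s n) = chart_coord (\<not> b) (sphere_chart (\<not> b) 0)"
      by (simp add: chart_hole_eq_sphere_chart)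
    then show False
      by (simp add: s_def del: of_nat_Suc)
  qed
  have "eventually (\<lambda>n. s n \<noteq> z) sequentially"
    using sphere_lim_eventually_neq[OF s hole[symmetric]] .
  then have "eventually (\<lambda>n. F (z, s n) = c) sequentially"
  proof (rule eventually_mono)
    fix n assume "s n \<noteq> z"
    then show "F (z, s n) = c"
      using eq[of "chart_coord b (s n)"] sphere_chart_chart_coord[OF not_hole] by simp
  qed
  then have "((\<lambda>n. F (z, s n)) \<longlongrightarrow> c) sequentially"
    by (rule tendsto_eventually)
  moreover have "((\<lambda>n. F (z, s n)) \<longlongrightarrow> F (z, chart_hole b)) sequentially"
    using holomorphic_on_G_tendsto[OF F _ sphere_lim_const s] hole by (simp add: G_dom_def)
  ultimately show ?thesis
    using LIMSEQ_unique by metis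
qed

lemma slice_eq_of_accumulating:
  assumes F: "holomorphic_on_G F"
    and lim: "sphere_lim w x" and wx: "\<And>n. w n \<noteq> x" and "x \<noteq> z"
    and eq: "\<And>n. w n \<noteq> z \<Longrightarrow> F (z, w n) = c"
    and "q \<noteq> z"
  shows "F (z, q) = c"
proof -
  define b where "b = chart_of x"
  have "eventually (\<lambda>n. w n \<noteq> z \<and> F (z, w n) = c) sequentially"
    using sphere_lim_eventually_neq[OF lim \<open>x \<noteq> z\<close>[symmetric]] by (rule eventually_mono) (simp add: eq)
  then have lim_pt: "chart_coord b x islimpt {v. sphere_chart b v \<noteq> z \<and> F (z, sphere_chart b v) = c}"
    unfolding b_def by (rule sphere_lim_islimpt_chart[OF lim wx])
  have chart: "F (z, sphere_chart b v) = c" if "sphere_chart b v \<noteq> z" for v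
  proof (rule slice_eq_if_islimpt[OF F _ lim_pt that])
    show "sphere_chart b (chart_coord b x) \<noteq> z"
      using \<open>x \<noteq> z\<close> by (simp add: b_def sphere_chart_chart_of)
  qed
  show ?thesis
  proof (cases "q = chart_hole b")
    case True
    then show ?thesis
      using slice_eq_at_chart_hole[OF F chart] \<open>q \<noteq> z\<close> by blast
  next
    case False
    then show ?thesis
      using chart[of "chart_coord b q"] \<open>q \<noteq> z\<close> by (simp add: sphere_chart_chart_coord)
  qed
qed

definition cross_const :: "(csphere \<times> csphere \<Rightarrow> complex) \<Rightarrow> complex \<Rightarrow> csphere \<Rightarrow> bool" where
  "cross_const F c v \<longleftrightarrow> (\<forall>q. q \<noteq> v \<longrightarrow> F (v, q) = c) \<and> (\<forall>z. z \<noteq> v \<longrightarrow> F (z, v) = c)"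

lemma cross_const_moebius_act:
  assumes det: "det A = 1"
    and inv: "\<And>z w. z \<noteq> w \<Longrightarrow> F (moebius_act A z, moebius_act A w) = F (z, w)"
    and v: "cross_const F c v"
  shows "cross_const F c (moebius_act A v)"
  unfolding cross_const_def
proof safe
  fix q assume "q \<noteq> moebius_act A v"
  then have "v \<noteq> moebius_act (adjugate2 A) q"
    using moebius_act_adjugate2(1)[OF det] by metis
  then show "F (moebius_act A v, q) = c"
    using inv v moebius_act_adjugate2(1)[OF det, of q] unfolding cross_const_def by metis
next
  fix z assume "z \<noteq> moebius_act A v"
  then have "moebius_act (adjugate2 A) z \<noteq> v"
    using moebius_act_adjugate2(1)[OF det] by metis
  then show "F (z, moebius_act A v) = c"
    using inv v moebius_act_adjugate2(1)[OF det, of z] unfolding cross_const_def by metis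
qed

lemma cross_const_limit_points:
  assumes G: "fuchsian \<Gamma>" and F: "holomorphic_on_G F"
    and inv: "\<forall>A\<in>\<Gamma>. \<forall>z w. z \<noteq> w \<longrightarrow> F (moebius_act A z, moebius_act A w) = F (z, w)"
    and L: "l1 \<in> limit_set \<Gamma>" "l2 \<in> limit_set \<Gamma>" "l3 \<in> limit_set \<Gamma>"
    and d: "l1 \<noteq> l2" "l1 \<noteq> l3" "l2 \<noteq> l3"
  shows "cross_const F (F (l1, l2)) l1" "cross_const F (F (l1, l2)) l2" "cross_const F (F (l1, l2)) l3"
proof -
  note R = limit_point_slices_const(1)[OF G F inv] and C = limit_point_slices_const(2)[OF G F inv]
  define c where "c = F (l1, l2)"
  text \<open>Each row and column through \<open>l\<^sub>i\<close> is constant; they meet off the diagonal.\<close>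
  have r1: "F (l1, q) = c" if "q \<noteq> l1" for q using R[OF L(1), of q l2] that d by (simp add: c_def)
  have c2: "F (z, l2) = c" if "z \<noteq> l2" for z using C[OF L(2), of z l1] that d by (simp add: c_def)
  have c3: "F (z, l3) = c" if "z \<noteq> l3" for z using C[OF L(3), of z l1] r1[of l3] that d by simp
  have r2: "F (l2, q) = c" if "q \<noteq> l2" for q using R[OF L(2), of q l3] c3[of l2] that d by simp
  have r3: "F (l3, q) = c" if "q \<noteq> l3" for q using R[OF L(3), of q l2] c2[of l3] that d by simp
  have c1: "F (z, l1) = c" if "z \<noteq> l1" for z using C[OF L(1), of z l2] r2[of l1] that d by simp
  show "cross_const F (F (l1, l2)) l1" "cross_const F (F (l1, l2)) l2" "cross_const F (F (l1, l2)) l3"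
    unfolding cross_const_def c_def[symmetric] using r1 r2 r3 c1 c2 c3 by blast+
qed

lemma const_of_cross_const_accumulating:
  assumes F: "holomorphic_on_G F"
    and lim: "sphere_lim w x" and wx: "\<And>n. w n \<noteq> x"
    and cw: "\<And>n. cross_const F c (w n)" and cx: "cross_const F c x"
    and p: "p \<in> G_dom"
  shows "F p = c"
proof -
  obtain z q where p: "p = (z, q)" "q \<noteq> z"
    using p by (auto simp: G_dom_def)
  show ?thesis
  proof (cases "z = x")
    case True
    then show ?thesis
      using cx p unfolding cross_const_def by simp
  next
    case False
    have "F (z, w n) = c" if "w n \<noteq> z" for n
      using cw[of n] that unfolding cross_const_def by simp
    then show ?thesis
      using slice_eq_of_accumulating[OF F lim wx] False p by metis
  qed
qed

lemma obtain_three_distinct: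
  assumes "\<not> (finite S \<and> card S \<le> 2)"
  obtains a b c where "a \<in> S" "b \<in> S" "c \<in> S" "a \<noteq> b" "a \<noteq> c" "b \<noteq> c"
proof -
  have "\<exists>T. T \<subseteq> S \<and> card T = 3"
  proof (cases "finite S")
    case True
    then have "3 \<le> card S"
      using assms by simp
    then show ?thesis
      by (meson obtain_subset_with_card_n)
  next
    case False
    then show ?thesis
      using infinite_arbitrarily_large[OF False, of 3] by blast
  qed
  then obtain x y z where "{x, y, z} \<subseteq> S" "x \<noteq> y" "x \<noteq> z" "y \<noteq> z"
    unfolding card_3_iff by blast
  then show ?thesis
    by (intro that[of x y z]) auto
qed

lemma const_of_three_cross_const:
  assumes G: "fuchsian \<Gamma>" and F: "holomorphic_on_G F"
    and inv: "\<forall>A\<in>\<Gamma>. \<forall>z w. z \<noteq> w \<longrightarrow> F (moebius_act A z, moebius_act A w) = F (z, w)"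
    and l: "l \<in> limit_set \<Gamma>"
    and cross: "cross_const F c l" "cross_const F c l'" "cross_const F c l''"
    and d: "l \<noteq> l'" "l \<noteq> l''" "l' \<noteq> l''"
    and p: "p \<in> G_dom"
  shows "F p = c"
proof -
  text \<open>Two of the three points avoid the repeller \<open>Y\<close>; their images under \<open>B n\<close> are
    points of \<open>cross_const F c\<close> accumulating at \<open>l\<close>.\<close>
  obtain B Y where B: "\<And>n. B n \<in> \<Gamma>" "\<And>z. z \<noteq> Y \<Longrightarrow> sphere_lim (\<lambda>n. moebius_act (B n) z) l"
    by (rule limit_point_north_south[OF G l]) blast
  have det: "det (B n) = 1" for n
    using fuchsian_det[OF G B(1)] .
  obtain u u' where u: "cross_const F c u" "cross_const F c u'" "u \<noteq> Y" "u' \<noteq> Y" "u \<noteq> u'"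
  proof -
    consider "Y \<noteq> l" "Y \<noteq> l'" | "Y \<noteq> l" "Y \<noteq> l''" | "Y \<noteq> l'" "Y \<noteq> l''"
      using d by blast
    then show thesis
      using that cross d by cases auto
  qed
  have "moebius_act (B n) u \<noteq> moebius_act (B n) u'" for n
    using u(5) moebius_act_adjugate2(2)[OF det, of n] by metis
  then obtain w where w: "\<And>n. w n = moebius_act (B n) u \<or> w n = moebius_act (B n) u'"
      "\<And>n. w n \<noteq> l" "sphere_lim w l"
    using sphere_lim_avoiding[OF B(2)[OF u(3)] B(2)[OF u(4)]] by blast
  have "cross_const F c (w n)" for n
    using w(1)[of n] cross_const_moebius_act[OF det inv[rule_format, OF B(1)]] u(1,2) by auto
  then show ?thesis
    using const_of_cross_const_accumulating[OF F w(3) w(2) _ cross(1) \<open>p \<in> G_dom\<close>] by blast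
qed

theorem mainTheorem11:
  fixes \<Gamma> :: "(real^2^2) set" and F :: "csphere \<times> csphere \<Rightarrow> complex"
  assumes "fuchsian \<Gamma>" and "non_elementary \<Gamma>"
    and "holomorphic_on_G F"
    and "\<forall>A\<in>\<Gamma>. \<forall>p\<in>G_dom. F (moebius_act A (fst p), moebius_act A (snd p)) = F p"
  shows "\<exists>c. \<forall>p\<in>G_dom. F p = c"
proof -
  note G = assms(1) and F = assms(3)
  have inv: "\<forall>A\<in>\<Gamma>. \<forall>z w. z \<noteq> w \<longrightarrow> F (moebius_act A z, moebius_act A w) = F (z, w)"
    using assms(4) by (auto simp: G_dom_def)
  obtain l1 l2 l3 where L: "l1 \<in> limit_set \<Gamma>" "l2 \<in> limit_set \<Gamma>" "l3 \<in> limit_set \<Gamma>"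
      and d: "l1 \<noteq> l2" "l1 \<noteq> l3" "l2 \<noteq> l3"
    using assms(2) unfolding non_elementary_def by (rule obtain_three_distinct)
  show ?thesis
    using const_of_three_cross_const[OF G F inv L(1) cross_const_limit_points[OF G F inv L d] d] by blast
qed

end
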